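(* For every integer $k\ge 8$, the Hasse diagram (directed graph of the cover relation) of $TW_k$ has clique-width at least $\lceil k/13\rceil$.
   Context: For an integer $k\ge3$, $TW_k$ ("trunk with woodpeckers") is the order on the elements $t_0,\dots,t_{k-1}$ together with one element $w_{a,b}$ for each pair of integers $0\le a$, $b\le k-1$ with $b\ge a+2$, whose order relation is: $t_j<t_l$ iff $j<l$; $t_j<w_{a,b}$ iff $j\le a$; $w_{a,b}<t_j$ iff $j\ge b$; $w_{a,b}<w_{c,d}$ iff $b\le c$; all other pairs are incomparable. It has $\frac{k^2-k}{2}+1$ elements; its covering pairs are $t_j\lessdot t_{j+1}$, $t_a\lessdot w_{a,b}$ and $w_{a,b}\lessdot t_b$. ($x$ is covered by $y$ if $x<y$ and no $z$ satisfies $x<z<y$.) Clique-width is the standard notion (minimum number of labels in a clique-width expression). *)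

theory Defs
  imports Complex_Main
begin

text \<open>Only the values of lab on V matter.
  Vertices of the expression are named by the vertices of the graph itself, so no
  isomorphism is needed.\<close>

inductive cw_gen :: "nat \<Rightarrow> 'v set \<Rightarrow> ('v \<times> 'v) set \<Rightarrow> ('v \<Rightarrow> nat) \<Rightarrow> bool" for k :: nat where
  cw_vertex: "i < k \<Longrightarrow> cw_gen k {v} {} (\<lambda>_. i)"
| cw_union: "cw_gen k V1 E1 l1 \<Longrightarrow> cw_gen k V2 E2 l2 \<Longrightarrow> V1 \<inter> V2 = {} \<Longrightarrow>
     cw_gen k (V1 \<union> V2) (E1 \<union> E2) (\<lambda>x. if x \<in> V1 then l1 x else l2 x)"
| cw_arcs: "cw_gen k V E l \<Longrightarrow> i < k \<Longrightarrow> j < k \<Longrightarrow> i \<noteq> j \<Longrightarrow>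
     cw_gen k V (E \<union> {(x, y). x \<in> V \<and> y \<in> V \<and> l x = i \<and> l y = j}) l"
| cw_relabel: "cw_gen k V E l \<Longrightarrow> i < k \<Longrightarrow> j < k \<Longrightarrow>
     cw_gen k V E (\<lambda>x. if l x = i then j else l x)"

definition clique_width :: "'v set \<Rightarrow> ('v \<times> 'v) set \<Rightarrow> nat" where
  "clique_width V E = (LEAST k. \<exists>l. cw_gen k V E l)"

section \<open>The order TW_k (trunk with woodpeckers)\<close>

datatype tw_elem = T nat | W nat nat

definition tw_elems :: "nat \<Rightarrow> tw_elem set" where
  "tw_elems k = {T j | j. j < k} \<union> {W a b | a b. b < k \<and> a + 2 \<le> b}"

fun tw_less :: "tw_elem \<Rightarrow> tw_elem \<Rightarrow> bool" where
  "tw_less (T j) (T l) = (j < l)"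
| "tw_less (T j) (W a b) = (j \<le> a)"
| "tw_less (W a b) (T j) = (b \<le> j)"
| "tw_less (W a b) (W c d) = (b \<le> c)"

definition tw_hasse :: "nat \<Rightarrow> (tw_elem \<times> tw_elem) set" where
  "tw_hasse k = {(x, y). x \<in> tw_elems k \<and> y \<in> tw_elems k \<and> tw_less x y \<and>
      \<not> (\<exists>z \<in> tw_elems k. tw_less x z \<and> tw_less z y)}"

end

theory Submission
  imports Defs
begin

text \<open>Take any expression with c labels and a subexpression whose vertex set X contains
  between q + 4 and 2q + 8 trunk elements. Vertices of X carrying the same label there are
  indistinguishable from outside X. If at least q trunk elements of X have a neighbour outside X,
  their neighbourhoods differ, so they need q labels. Otherwise four trunk elements of X, the
  least t_p and the greatest t_r among them, have all their neighbours in X; then every trunk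
  element t_j outside X (there are at least k - 2q - 8 \<ge> q of them) has a woodpecker neighbour
  in X, namely w_{p,j} or w_{j,r}, and these woodpeckers again need pairwise different labels.\<close>

lemma cw_gen_wellformed:
  "cw_gen n V E l \<Longrightarrow> finite V \<and> V \<noteq> {} \<and> E \<subseteq> V \<times> V \<and> (\<forall>x\<in>V. l x < n)"
  by (induction rule: cw_gen.induct) auto

lemma cw_gen_edgeless:
  assumes "finite V" "V \<noteq> {}" "inj_on g V" "\<forall>x\<in>V. g x < n"
  shows "\<exists>l. cw_gen n V {} l \<and> (\<forall>x\<in>V. l x = g x)"
  using assms
proof (induction V rule: finite_ne_induct)
  case (singleton x)
  then show ?case by (intro exI[of _ "\<lambda>_. g x"]) (auto intro: cw_vertex)
next
  case (insert x F)
  obtain l where l: "cw_gen n F {} l" "\<forall>y\<in>F. l y = g y"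
    using insert.IH insert.prems by auto
  have "cw_gen n {x} {} (\<lambda>_. g x)" using insert.prems by (intro cw_vertex) auto
  from cw_union[OF this l(1)] insert.hyps
  have "cw_gen n (insert x F) {} (\<lambda>y. if y \<in> {x} then g x else l y)" by auto
  then show ?case using l(2) by fastforce
qed

text \<open>With injective labels, each single arc is produced by one arc-adding operation.\<close>
lemma cw_gen_add_arcs:
  assumes g: "cw_gen n V {} l" and inj: "inj_on l V"
    and "finite A" "\<forall>(x, y)\<in>A. x \<in> V \<and> y \<in> V \<and> x \<noteq> y"
  shows "cw_gen n V A l"
  using assms(3,4)
proof (induction A rule: finite_induct)
  case empty
  then show ?case using g by simp
next
  case (insert p A)
  obtain x y where p: "p = (x, y)" by (cases p)
  have xy: "x \<in> V" "y \<in> V" "x \<noteq> y" using insert.prems p by auto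
  have gA: "cw_gen n V A l" using insert by auto
  have "l x < n" "l y < n" using cw_gen_wellformed[OF gA] xy by auto
  moreover have "l x \<noteq> l y" using inj xy by (meson inj_on_def)
  ultimately have "cw_gen n V (A \<union> {(u, v). u \<in> V \<and> v \<in> V \<and> l u = l x \<and> l v = l y}) l"
    by (rule cw_arcs[OF gA])
  moreover have "{(u, v). u \<in> V \<and> v \<in> V \<and> l u = l x \<and> l v = l y} = {(x, y)}"
    using inj xy unfolding inj_on_def by auto
  ultimately show ?case unfolding p by simp
qed

lemma cw_gen_card:
  assumes "finite V" "V \<noteq> {}" "E \<subseteq> V \<times> V" "\<forall>x. (x, x) \<notin> E"
  shows "\<exists>l. cw_gen (card V) V E l"
proof -
  obtain g where "bij_betw g V {0..<card V}" using ex_bij_betw_finite_nat[OF assms(1)] by blast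
  then have g: "inj_on g V" "\<forall>x\<in>V. g x < card V" by (auto simp: bij_betw_def)
  obtain l where l: "cw_gen (card V) V {} l" "\<forall>x\<in>V. l x = g x"
    using cw_gen_edgeless[OF assms(1,2) g] by blast
  have "inj_on l V" using g(1) l(2) by (metis inj_on_cong)
  moreover have "finite E" using assms(1,3) by (meson finite_SigmaI finite_subset)
  ultimately show ?thesis using cw_gen_add_arcs[OF l(1)] assms(3,4) by blast
qed

lemma clique_width_attained:
  assumes "cw_gen n V E l"
  shows "\<exists>l. cw_gen (clique_width V E) V E l"
  unfolding clique_width_def by (rule LeastI_ex) (use assms in blast)

text \<open>X plays the vertex set of a subexpression and f its labelling there: equally labelled
  vertices of X are twins with respect to the vertices outside X, and still share the current
  label l.\<close>
definition cw_part ::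
  "nat \<Rightarrow> 'v set \<Rightarrow> ('v \<times> 'v) set \<Rightarrow> ('v \<Rightarrow> nat) \<Rightarrow> 'v set \<Rightarrow> ('v \<Rightarrow> nat) \<Rightarrow> bool" where
  "cw_part n V E l X f \<longleftrightarrow> X \<subseteq> V \<and> (\<forall>x\<in>X. f x < n) \<and>
     (\<forall>x\<in>X. \<forall>y\<in>X. f x = f y \<longrightarrow>
        l x = l y \<and> (\<forall>z\<in>V - X. ((x, z) \<in> E \<longleftrightarrow> (y, z) \<in> E) \<and> ((z, x) \<in> E \<longleftrightarrow> (z, y) \<in> E)))"

lemma cw_part_subset: "cw_part n V E l X f \<Longrightarrow> X \<subseteq> V"
  unfolding cw_part_def by blast

lemma cw_part_label_less: "cw_part n V E l X f \<Longrightarrow> x \<in> X \<Longrightarrow> f x < n"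
  unfolding cw_part_def by blast

lemma cw_part_twins:
  "cw_part n V E l X f \<Longrightarrow> x \<in> X \<Longrightarrow> y \<in> X \<Longrightarrow> f x = f y \<Longrightarrow>
     l x = l y \<and> (\<forall>z\<in>V - X. ((x, z) \<in> E \<longleftrightarrow> (y, z) \<in> E) \<and> ((z, x) \<in> E \<longleftrightarrow> (z, y) \<in> E))"
  unfolding cw_part_def by blast

lemma cw_part_whole: "\<forall>x\<in>V. l x < n \<Longrightarrow> cw_part n V E l V l"
  unfolding cw_part_def by simp

lemma cw_part_extend:
  assumes part: "cw_part n V E l X f" and "E \<subseteq> V \<times> V" "V \<subseteq> V'" "\<forall>x\<in>V. l' x = l x"
    and same_arcs: "\<forall>x\<in>V. \<forall>z. ((x, z) \<in> E' \<longleftrightarrow> (x, z) \<in> E) \<and> ((z, x) \<in> E' \<longleftrightarrow> (z, x) \<in> E)"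
  shows "cw_part n V' E' l' X f"
  unfolding cw_part_def
proof (intro conjI ballI impI)
  show "X \<subseteq> V'" using cw_part_subset[OF part] assms(3) by blast
  show "\<And>x. x \<in> X \<Longrightarrow> f x < n" using cw_part_label_less[OF part] .
  fix x y assume xy: "x \<in> X" "y \<in> X" "f x = f y"
  then have "x \<in> V" "y \<in> V" using cw_part_subset[OF part] by blast+
  note twins = cw_part_twins[OF part xy]
  then show "l' x = l' y" using assms(4) \<open>x \<in> V\<close> \<open>y \<in> V\<close> by simp
  fix z assume z: "z \<in> V' - X"
  have "((x, z) \<in> E' \<longleftrightarrow> (x, z) \<in> E) \<and> ((z, x) \<in> E' \<longleftrightarrow> (z, x) \<in> E)"
    "((y, z) \<in> E' \<longleftrightarrow> (y, z) \<in> E) \<and> ((z, y) \<in> E' \<longleftrightarrow> (z, y) \<in> E)"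
    using same_arcs \<open>x \<in> V\<close> \<open>y \<in> V\<close> by blast+
  moreover have "((x, z) \<in> E \<longleftrightarrow> (y, z) \<in> E) \<and> ((z, x) \<in> E \<longleftrightarrow> (z, y) \<in> E)"
  proof (cases "z \<in> V")
    case True
    then show ?thesis using twins z by blast
  next
    case False
    then show ?thesis using assms(2) by blast
  qed
  ultimately show "(x, z) \<in> E' \<longleftrightarrow> (y, z) \<in> E'" "(z, x) \<in> E' \<longleftrightarrow> (z, y) \<in> E'"
    by simp_all
qed

lemma cw_part_add_arcs:
  assumes part: "cw_part n V E l X f"
  shows "cw_part n V (E \<union> {(x, y). x \<in> V \<and> y \<in> V \<and> l x = i \<and> l y = j}) l X f"
  unfolding cw_part_def
proof (intro conjI ballI impI)
  show "X \<subseteq> V" using cw_part_subset[OF part] .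
  show "\<And>x. x \<in> X \<Longrightarrow> f x < n" using cw_part_label_less[OF part] .
  fix x y assume xy: "x \<in> X" "y \<in> X" "f x = f y"
  note twins = cw_part_twins[OF part xy]
  then show "l x = l y" by blast
  fix z assume "z \<in> V - X"
  then have "(x, z) \<in> E \<longleftrightarrow> (y, z) \<in> E" "(z, x) \<in> E \<longleftrightarrow> (z, y) \<in> E" using twins by blast+
  moreover have "x \<in> V" "y \<in> V" using xy cw_part_subset[OF part] by blast+
  ultimately show "(x, z) \<in> E \<union> {(x, y). x \<in> V \<and> y \<in> V \<and> l x = i \<and> l y = j} \<longleftrightarrow>
      (y, z) \<in> E \<union> {(x, y). x \<in> V \<and> y \<in> V \<and> l x = i \<and> l y = j}"
    "(z, x) \<in> E \<union> {(x, y). x \<in> V \<and> y \<in> V \<and> l x = i \<and> l y = j} \<longleftrightarrow>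
      (z, y) \<in> E \<union> {(x, y). x \<in> V \<and> y \<in> V \<and> l x = i \<and> l y = j}"
    using twins by simp_all
qed

lemma cw_part_relabel:
  assumes part: "cw_part n V E l X f"
  shows "cw_part n V E (g \<circ> l) X f"
  using cw_part_subset[OF part] cw_part_label_less[OF part] cw_part_twins[OF part]
  unfolding cw_part_def comp_def by metis

lemma cw_part_card_le:
  assumes "cw_part n V E l X f" "inj_on (f \<circ> g) A" "g ` A \<subseteq> X"
  shows "card A \<le> n"
proof -
  have "(f \<circ> g) ` A \<subseteq> {..<n}" using cw_part_label_less[OF assms(1)] assms(3) by auto
  from card_inj_on_le[OF assms(2) this] show ?thesis by simp
qed

text \<open>Descend into the larger operand of a union as long as it still has at least m
  vertices of S; the first union where both operands have fewer gives between m and 2m.\<close>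
lemma cw_gen_balanced_part:
  assumes "cw_gen n V E l" "1 \<le> m" "m \<le> card (V \<inter> S)"
  shows "\<exists>X f. cw_part n V E l X f \<and> m \<le> card (X \<inter> S) \<and> card (X \<inter> S) \<le> 2 * m"
  using assms
proof (induction arbitrary: m rule: cw_gen.induct)
  case (cw_vertex i v)
  then have "card ({v} \<inter> S) = 1" "m = 1"
    using card_mono[of "{v}" "{v} \<inter> S"] by (auto split: if_splits)
  moreover have "cw_part n {v} {} (\<lambda>_. i) {v} (\<lambda>_. i)" using cw_vertex.hyps by (intro cw_part_whole) simp
  ultimately show ?case by auto
next
  case (cw_union V1 E1 l1 V2 E2 l2)
  let ?l = "\<lambda>x. if x \<in> V1 then l1 x else l2 x"
  note wf1 = cw_gen_wellformed[OF cw_union.hyps(1)] and wf2 = cw_gen_wellformed[OF cw_union.hyps(2)]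
  have card_union: "card ((V1 \<union> V2) \<inter> S) = card (V1 \<inter> S) + card (V2 \<inter> S)"
    unfolding Int_Un_distrib2 using wf1 wf2 cw_union.hyps(3) by (intro card_Un_disjoint) auto
  consider "m \<le> card (V1 \<inter> S)" | "m \<le> card (V2 \<inter> S)"
    | "card (V1 \<inter> S) < m" "card (V2 \<inter> S) < m" by linarith
  then show ?case
  proof cases
    case 1
    then obtain X f where part: "cw_part n V1 E1 l1 X f"
      and "m \<le> card (X \<inter> S)" "card (X \<inter> S) \<le> 2 * m"
      using cw_union.IH(1) cw_union.prems(1) by blast
    moreover have "cw_part n (V1 \<union> V2) (E1 \<union> E2) ?l X f"
      by (rule cw_part_extend[OF part]) (use wf1 wf2 cw_union.hyps(3) in auto)
    ultimately show ?thesis by blast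
  next
    case 2
    then obtain X f where part: "cw_part n V2 E2 l2 X f"
      and "m \<le> card (X \<inter> S)" "card (X \<inter> S) \<le> 2 * m"
      using cw_union.IH(2) cw_union.prems(1) by blast
    moreover have "cw_part n (V1 \<union> V2) (E1 \<union> E2) ?l X f"
      by (rule cw_part_extend[OF part]) (use wf1 wf2 cw_union.hyps(3) in auto)
    ultimately show ?thesis by blast
  next
    case 3
    have "cw_part n (V1 \<union> V2) (E1 \<union> E2) ?l (V1 \<union> V2) ?l"
      using wf1 wf2 by (intro cw_part_whole) auto
    then show ?thesis using 3 card_union cw_union.prems(2) by (intro exI) auto
  qed
next
  case (cw_arcs V E l i j)
  then show ?case using cw_part_add_arcs by blast
next
  case (cw_relabel V E l i j)
  then show ?case using cw_part_relabel[where g = "\<lambda>a. if a = i then j else a"]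
    by (simp add: comp_def) blast
qed

lemma T_in_tw_elems [simp]: "T j \<in> tw_elems k \<longleftrightarrow> j < k"
  by (auto simp: tw_elems_def)

lemma W_in_tw_elems [simp]: "W a b \<in> tw_elems k \<longleftrightarrow> b < k \<and> a + 2 \<le> b"
  by (auto simp: tw_elems_def)

lemma finite_tw_elems: "finite (tw_elems k)"
proof -
  have "tw_elems k \<subseteq> T ` {..<k} \<union> case_prod W ` ({..<k} \<times> {..<k})"
    unfolding tw_elems_def by auto
  then show ?thesis by (rule finite_subset) auto
qed

lemma tw_hasse_subset: "tw_hasse k \<subseteq> tw_elems k \<times> tw_elems k"
  by (auto simp: tw_hasse_def)

lemma tw_hasse_no_between:
  "(x, y) \<in> tw_hasse k \<Longrightarrow> z \<in> tw_elems k \<Longrightarrow> tw_less x z \<Longrightarrow> tw_less z y \<Longrightarrow> False"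
  unfolding tw_hasse_def by blast

lemma tw_hasse_T_T_iff: "(T j, T j') \<in> tw_hasse k \<longleftrightarrow> j' = Suc j \<and> j' < k"
proof
  assume h: "(T j, T j') \<in> tw_hasse k"
  then have "j < j'" "j' < k" by (auto simp: tw_hasse_def)
  moreover have "\<not> Suc j < j'" using tw_hasse_no_between[OF h, of "T (Suc j)"] \<open>j' < k\<close> by auto
  ultimately show "j' = Suc j \<and> j' < k" by auto
qed (auto simp: tw_hasse_def tw_elems_def)

lemma tw_hasse_T_W_iff: "(T j, W a b) \<in> tw_hasse k \<longleftrightarrow> j = a \<and> b < k \<and> a + 2 \<le> b"
proof
  assume h: "(T j, W a b) \<in> tw_hasse k"
  then have "j \<le> a" "b < k" "a + 2 \<le> b" by (auto simp: tw_hasse_def)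
  moreover have "a \<le> j"
  proof (rule ccontr)
    assume "\<not> a \<le> j"
    then show False using tw_hasse_no_between[OF h, of "T a"] calculation by simp
  qed
  ultimately show "j = a \<and> b < k \<and> a + 2 \<le> b" by simp
qed (auto simp: tw_hasse_def tw_elems_def)

lemma tw_hasse_W_T_iff: "(W a b, T j) \<in> tw_hasse k \<longleftrightarrow> j = b \<and> b < k \<and> a + 2 \<le> b"
proof
  assume h: "(W a b, T j) \<in> tw_hasse k"
  then have "b \<le> j" "j < k" "a + 2 \<le> b" by (auto simp: tw_hasse_def)
  moreover have "j \<le> b"
  proof (rule ccontr)
    assume "\<not> j \<le> b"
    then show False using tw_hasse_no_between[OF h, of "T b"] calculation by simp
  qed
  ultimately show "j = b \<and> b < k \<and> a + 2 \<le> b" by simp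
qed (auto simp: tw_hasse_def tw_elems_def)

lemma tw_hasse_W_W: "(W a b, W c d) \<notin> tw_hasse k"
proof
  assume h: "(W a b, W c d) \<in> tw_hasse k"
  then have "b \<le> c" "b < k" by (auto simp: tw_hasse_def)
  then show False using tw_hasse_no_between[OF h, of "T b"] by auto
qed

lemma tw_hasse_irrefl: "(x, x) \<notin> tw_hasse k"
  by (cases x) (auto simp: tw_hasse_T_T_iff tw_hasse_W_W)

lemma tw_hasse_T_out_unique: "(T j, z) \<in> tw_hasse k \<Longrightarrow> (T j', z) \<in> tw_hasse k \<Longrightarrow> j = j'"
  by (cases z) (auto simp: tw_hasse_T_T_iff tw_hasse_T_W_iff)

lemma tw_hasse_T_in_unique: "(z, T j) \<in> tw_hasse k \<Longrightarrow> (z, T j') \<in> tw_hasse k \<Longrightarrow> j = j'"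
  by (cases z) (auto simp: tw_hasse_T_T_iff tw_hasse_W_T_iff)

lemma tw_boundary_trunk_card_le:
  assumes part: "cw_part c (tw_elems k) (tw_hasse k) l X f"
  shows "card {j. T j \<in> X \<and> (\<exists>z. z \<notin> X \<and> ((T j, z) \<in> tw_hasse k \<or> (z, T j) \<in> tw_hasse k))} \<le> c"
    (is "card ?B \<le> c")
proof (rule cw_part_card_le[OF part])
  show "T ` ?B \<subseteq> X" by auto
  show "inj_on (f \<circ> T) ?B"
  proof (rule inj_onI)
    fix j j' assume "j \<in> ?B" "j' \<in> ?B" and same: "(f \<circ> T) j = (f \<circ> T) j'"
    then obtain z where z: "z \<notin> X" "(T j, z) \<in> tw_hasse k \<or> (z, T j) \<in> tw_hasse k"
      and X: "T j \<in> X" "T j' \<in> X" by auto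
    from z have "z \<in> tw_elems k - X" using tw_hasse_subset by blast
    then have "((T j, z) \<in> tw_hasse k \<longleftrightarrow> (T j', z) \<in> tw_hasse k) \<and>
        ((z, T j) \<in> tw_hasse k \<longleftrightarrow> (z, T j') \<in> tw_hasse k)"
      using cw_part_twins[OF part X] same by simp
    then show "j = j'" using z(2) tw_hasse_T_out_unique tw_hasse_T_in_unique by blast
  qed
qed

text \<open>Every trunk element t_j outside X is adjacent to the woodpecker w_{p,j} (if j \<ge> p + 2)
  or w_{j,r} (otherwise), which lies in X because it is a neighbour of t_p or t_r.\<close>
lemma tw_outside_trunk_card_le:
  assumes part: "cw_part c (tw_elems k) (tw_hasse k) l X f"
    and "T p \<in> X" "T r \<in> X" "p + 3 \<le> r" "r < k"
    and p_closed: "\<forall>z. (T p, z) \<in> tw_hasse k \<longrightarrow> z \<in> X"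
    and r_closed: "\<forall>z. (z, T r) \<in> tw_hasse k \<longrightarrow> z \<in> X"
  shows "card {j. j < k \<and> T j \<notin> X} \<le> c" (is "card ?C \<le> c")
proof -
  define w where "w j = (if p + 2 \<le> j then W p j else W j r)" for j
  have adj: "if p + 2 \<le> j then (w j, T j) \<in> tw_hasse k else (T j, w j) \<in> tw_hasse k"
    if "j \<in> ?C" for j
    using that assms(4,5) by (simp add: w_def tw_hasse_W_T_iff tw_hasse_T_W_iff)
  have wX: "w j \<in> X" if "j \<in> ?C" for j
    using that assms(4,5) p_closed r_closed by (auto simp: w_def tw_hasse_W_T_iff tw_hasse_T_W_iff)
  show ?thesis
  proof (rule cw_part_card_le[OF part])
    show "w ` ?C \<subseteq> X" using wX by blast
    show "inj_on (f \<circ> w) ?C"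
    proof (rule inj_onI)
      fix a b assume ab: "a \<in> ?C" "b \<in> ?C" and same: "(f \<circ> w) a = (f \<circ> w) b"
      then have "T a \<in> tw_elems k - X" by simp
      then have twins: "((w a, T a) \<in> tw_hasse k \<longleftrightarrow> (w b, T a) \<in> tw_hasse k) \<and>
          ((T a, w a) \<in> tw_hasse k \<longleftrightarrow> (T a, w b) \<in> tw_hasse k)"
        using cw_part_twins[OF part wX[OF ab(1)] wX[OF ab(2)]] same by simp
      show "a = b"
        using adj[OF ab(1)] twins ab(1,2) \<open>T p \<in> X\<close> \<open>T r \<in> X\<close>
        by (auto simp: w_def tw_hasse_W_T_iff tw_hasse_T_W_iff split: if_splits)
    qed
  qed
qed

lemma tw_cw_gen_labels_ge:
  assumes gen: "cw_gen c (tw_elems k) (tw_hasse k) l" and "3 * q + 8 \<le> k"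
  shows "q \<le> c"
proof -
  have "tw_elems k \<inter> T ` {..<k} = T ` {..<k}" by auto
  then have "card (tw_elems k \<inter> T ` {..<k}) = k" by (simp add: card_image inj_on_def)
  then obtain X f where part: "cw_part c (tw_elems k) (tw_hasse k) l X f"
    and lower: "q + 4 \<le> card (X \<inter> T ` {..<k})" and upper: "card (X \<inter> T ` {..<k}) \<le> 2 * (q + 4)"
    using cw_gen_balanced_part[OF gen, of "q + 4" "T ` {..<k}"] assms(2) by auto
  define XT where "XT = {j. T j \<in> X}"
  have "X \<inter> T ` {..<k} = T ` XT" using cw_part_subset[OF part] unfolding XT_def by auto
  then have card_XT: "card (X \<inter> T ` {..<k}) = card XT" by (simp add: card_image inj_on_def)
  have XT_k: "XT \<subseteq> {..<k}" using cw_part_subset[OF part] unfolding XT_def by auto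
  then have "finite XT" by (rule finite_subset) simp
  define B where "B = {j \<in> XT. \<exists>z. z \<notin> X \<and> ((T j, z) \<in> tw_hasse k \<or> (z, T j) \<in> tw_hasse k)}"
  define A where "A = XT - B"
  show ?thesis
  proof (cases "q \<le> card B")
    case True
    then show ?thesis using tw_boundary_trunk_card_le[OF part] unfolding B_def XT_def by simp
  next
    case False
    have "card A = card XT - card B"
      unfolding A_def using \<open>finite XT\<close> by (intro card_Diff_subset) (auto simp: B_def)
    then have "4 \<le> card A" using False lower card_XT by linarith
    then have "finite A" "A \<noteq> {}" by (auto intro: card_ge_0_finite)
    define p r where "p = Min A" and "r = Max A"
    have pr: "p \<in> A" "r \<in> A" "A \<subseteq> {p..r}"
      using \<open>finite A\<close> \<open>A \<noteq> {}\<close> unfolding p_def r_def by auto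
    then have "p + 3 \<le> r" using card_mono[OF _ pr(3)] \<open>4 \<le> card A\<close> by fastforce
    moreover have "{j. j < k \<and> T j \<notin> X} = {..<k} - XT" unfolding XT_def by auto
    then have "card {j. j < k \<and> T j \<notin> X} = k - card XT"
      using XT_k \<open>finite XT\<close> by (simp add: card_Diff_subset)
    ultimately have "k - card XT \<le> c"
      using tw_outside_trunk_card_le[OF part, of p r] pr XT_k
      unfolding A_def B_def XT_def by auto
    then have "k \<le> c + card XT" by (simp only: le_diff_conv)
    moreover have "card XT \<le> 2 * q + 8" using upper card_XT by simp
    ultimately show ?thesis using assms(2) by linarith
  qed
qed

theorem lemma7p2:
  fixes k :: nat
  assumes "k \<ge> 8"
  shows "int (clique_width (tw_elems k) (tw_hasse k)) \<ge> \<lceil>real k / 13\<rceil>"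
proof -
  let ?c = "clique_width (tw_elems k) (tw_hasse k)"
  have "T 0 \<in> tw_elems k" using assms by simp
  then obtain l where gen: "cw_gen ?c (tw_elems k) (tw_hasse k) l"
    using cw_gen_card[OF finite_tw_elems _ tw_hasse_subset] tw_hasse_irrefl clique_width_attained
    by blast
  have "k \<le> 13 * ?c"
  proof (cases "k \<ge> 14")
    case True
    then show ?thesis using tw_cw_gen_labels_ge[OF gen, of "(k + 12) div 13"] by linarith
  next
    case False
    have "l (T 0) < ?c" using cw_gen_wellformed[OF gen] \<open>T 0 \<in> tw_elems k\<close> by blast
    then show ?thesis using False by linarith
  qed
  then show ?thesis by (simp add: ceiling_le_iff)
qed

end
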